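(* Let $\Bbbk$ be a field of characteristic $0$, $n\ge2$, and let $(A,\mu,\alpha)$ be a multiplicative $n$-ary totally Hom-associative algebra over $\Bbbk$, with $\mu(a_1,\ldots,a_n)=(a_1\cdots a_n)$. Define a $(2n-1)$-linear product by $(a_1,\ldots,a_{2n-1})^{(1)}=\big((a_1\cdots a_n),\alpha(a_{n+1}),\ldots,\alpha(a_{2n-1})\big)$ (the outer bracket being $\mu$). Then $A^1=(A,(\cdot)^{(1)},\alpha^2)$, with all $2n-2$ twisting maps equal to $\alpha^2$, is a multiplicative $(2n-1)$-ary totally Hom-associative algebra.
   Context: An $m$-ary Hom-algebra $(V,\mu,(\alpha_1,\ldots,\alpha_{m-1}))$ is a vector space $V$ with an $m$-linear map $\mu$ (written $\mu(a_1,\ldots,a_m)=(a_1\cdots a_m)$) and linear maps $\alpha_i\colon V\to V$. It is multiplicative if all $\alpha_i$ equal one map $\alpha$ and $\alpha\circ\mu=\mu\circ\alpha^{\otimes m}$. It is $m$-ary totally Hom-associative if for every $i\in\{1,\ldots,m-1\}$ and all $a_1,\ldots,a_{2m-1}$: $(\alpha_1(a_1),\ldots,\alpha_{i-1}(a_{i-1}),(a_i\cdots a_{i+m-1}),\alpha_i(a_{i+m}),\ldots,\alpha_{m-1}(a_{2m-1}))=(\alpha_1(a_1),\ldots,\alpha_i(a_i),(a_{i+1}\cdots a_{i+m}),\alpha_{i+1}(a_{i+m+1}),\ldots,\alpha_{m-1}(a_{2m-1}))$. *)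

theory Defs
  imports Complex_Main
begin

text \<open>An m-ary product on a k-vector space V (scalar multiplication scale) is
modelled as a function on lists; only its values on lists of length m matter.\<close>

definition multilinear ::
  "('k::field \<Rightarrow> 'v::ab_group_add \<Rightarrow> 'v) \<Rightarrow> nat \<Rightarrow> ('v list \<Rightarrow> 'v) \<Rightarrow> bool" where
  "multilinear scale m mu \<longleftrightarrow>
     (\<forall>xs ys. length xs + length ys + 1 = m \<longrightarrow>
        Vector_Spaces.linear scale scale (\<lambda>x. mu (xs @ x # ys)))"

definition hom_algebra ::
  "('k::field \<Rightarrow> 'v::ab_group_add \<Rightarrow> 'v) \<Rightarrow> nat \<Rightarrow> ('v list \<Rightarrow> 'v) \<Rightarrow> ('v \<Rightarrow> 'v) list \<Rightarrow> bool" where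
  "hom_algebra scale m mu alphas \<longleftrightarrow>
     Vector_Spaces.vector_space scale \<and> multilinear scale m mu \<and> length alphas = m - 1 \<and>
     (\<forall>f \<in> set alphas. Vector_Spaces.linear scale scale f)"

definition multiplicative_with ::
  "nat \<Rightarrow> ('v list \<Rightarrow> 'v) \<Rightarrow> ('v \<Rightarrow> 'v) list \<Rightarrow> ('v \<Rightarrow> 'v) \<Rightarrow> bool" where
  "multiplicative_with m mu alphas alpha \<longleftrightarrow>
     (\<forall>f \<in> set alphas. f = alpha) \<and>
     (\<forall>as. length as = m \<longrightarrow> alpha (mu as) = mu (map alpha as))"

definition multiplicative_hom_algebra ::
  "('k::field \<Rightarrow> 'v::ab_group_add \<Rightarrow> 'v) \<Rightarrow> nat \<Rightarrow> ('v list \<Rightarrow> 'v) \<Rightarrow> ('v \<Rightarrow> 'v) list \<Rightarrow> bool" where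
  "multiplicative_hom_algebra scale m mu alphas \<longleftrightarrow>
     hom_algebra scale m mu alphas \<and> (\<exists>alpha. multiplicative_with m mu alphas alpha)"

text \<open>The bracketing with the inner product at (0-indexed) position j, for a
list as = [a_0,...,a_{2m-2}]:
  (alpha_0 a_0, ..., alpha_{j-1} a_{j-1}, mu(a_j..a_{j+m-1}), alpha_j a_{j+m}, ..., alpha_{m-2} a_{2m-2}).\<close>

definition hom_bracket ::
  "nat \<Rightarrow> ('v list \<Rightarrow> 'v) \<Rightarrow> ('v \<Rightarrow> 'v) list \<Rightarrow> nat \<Rightarrow> 'v list \<Rightarrow> 'v" where
  "hom_bracket m mu alphas j as =
     mu (map (\<lambda>k. (alphas ! k) (as ! k)) [0..<j]
         @ [mu (take m (drop j as))]
         @ map (\<lambda>k. (alphas ! k) (as ! (k + m))) [j..<m - 1])"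

definition totally_hom_associative ::
  "nat \<Rightarrow> ('v list \<Rightarrow> 'v) \<Rightarrow> ('v \<Rightarrow> 'v) list \<Rightarrow> bool" where
  "totally_hom_associative m mu alphas \<longleftrightarrow>
     (\<forall>j as. j + 1 < m \<longrightarrow> length as = 2 * m - 1 \<longrightarrow>
        hom_bracket m mu alphas j as = hom_bracket m mu alphas (j + 1) as)"

definition derived_product ::
  "nat \<Rightarrow> ('v list \<Rightarrow> 'v) \<Rightarrow> ('v \<Rightarrow> 'v) \<Rightarrow> 'v list \<Rightarrow> 'v" where
  "derived_product n mu alpha as = mu (mu (take n as) # map alpha (drop n as))"

end

theory Submission
  imports Defs
begin

text \<open>By total Hom-associativity of \<open>\<mu>\<close>, the derived product \<open>D\<close> may equally be
computed with its inner \<open>\<mu>\<close> at any of the first \<open>n\<close> positions. Consider the bracket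
of \<open>D\<close> with the inner \<open>D\<close> at position \<open>i + p\<close>, where \<open>i, p < n\<close>. Moving the inner
\<open>\<mu>\<close> of the outer \<open>D\<close> to position \<open>i\<close> leaves an \<open>n\<close>-ary product of \<open>p\<close> twisted
letters, the inner \<open>D\<close> and \<open>n - 1 - p\<close> twisted letters; two further applications of
total Hom-associativity of \<open>\<mu>\<close> bring it to a normal form that no longer depends on
\<open>p\<close>. Every shift \<open>k \<mapsto> k + 1\<close> of the inner position stays within one block
\<open>i = 0\<close> or \<open>i = n - 1\<close>, which gives total Hom-associativity of \<open>D\<close>; linearity and
multiplicativity are inherited componentwise.\<close>

lemma list_split3:
  assumes "length xs = a + b + c"
  obtains A B C where "xs = A @ B @ C" "length A = a" "length B = b" "length C = c"
proof
  show "xs = take a xs @ take b (drop a xs) @ drop (a + b) xs"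
    by (metis append_take_drop_id drop_drop add.commute)
qed (use assms in auto)

definition const_bracket :: "nat \<Rightarrow> ('v list \<Rightarrow> 'v) \<Rightarrow> ('v \<Rightarrow> 'v) \<Rightarrow> nat \<Rightarrow> 'v list \<Rightarrow> 'v" where
  "const_bracket m mu f j as =
     mu (map f (take j as) @ [mu (take m (drop j as))] @ map f (drop (j + m) as))"

lemma hom_bracket_replicate:
  assumes "j + 1 \<le> m" "length as = 2 * m - 1"
  shows "hom_bracket m mu (replicate (m - 1) f) j as = const_bracket m mu f j as"
proof -
  have "map (\<lambda>k. (replicate (m - 1) f ! k) (as ! k)) [0..<j] = map f (take j as)"
    by (rule nth_equalityI) (use assms in auto)
  moreover have "map (\<lambda>k. (replicate (m - 1) f ! k) (as ! (k + m))) [j..<m - 1]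
      = map f (drop (j + m) as)"
    by (rule nth_equalityI) (use assms in \<open>auto simp: add_ac\<close>)
  ultimately show ?thesis
    unfolding hom_bracket_def const_bracket_def by simp
qed

lemma const_bracket_append:
  "length a = p \<Longrightarrow> length b = m \<Longrightarrow>
     const_bracket m mu f p (a @ b @ c) = mu (map f a @ [mu b] @ map f c)"
  unfolding const_bracket_def by simp

lemma const_bracket_eq_first:
  assumes "totally_hom_associative n mu (replicate (n - 1) f)" "j < n" "length as = 2 * n - 1"
  shows "const_bracket n mu f j as = const_bracket n mu f 0 as"
  using assms(2)
proof (induction j)
  case (Suc j)
  then have "hom_bracket n mu (replicate (n - 1) f) j as
      = hom_bracket n mu (replicate (n - 1) f) (Suc j) as"
    using assms(1,3) unfolding totally_hom_associative_def by auto
  with Suc show ?case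
    using hom_bracket_replicate[of j n as mu f] hom_bracket_replicate[of "Suc j" n as mu f]
      assms(3) by simp
qed simp

lemma derived_product_append:
  "length a = n \<Longrightarrow> derived_product n mu f (a @ b) = mu (mu a # map f b)"
  unfolding derived_product_def by simp

lemma derived_product_eq_const_bracket:
  "derived_product n mu f as = const_bracket n mu f 0 as"
  unfolding derived_product_def const_bracket_def by simp

lemma derived_product_multilinear:
  fixes mu :: "'v::ab_group_add list \<Rightarrow> 'v"
  assumes mu: "multilinear scale n mu" and alpha: "Vector_Spaces.linear scale scale alpha"
  shows "multilinear scale (2 * n - 1) (derived_product n mu alpha)"
  unfolding multilinear_def
proof (intro allI impI)
  fix xs ys :: "'v list"
  assume len: "length xs + length ys + 1 = 2 * n - 1"
  have lin: "Vector_Spaces.linear scale scale (\<lambda>x. mu (us @ x # vs))"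
    if "length us + length vs + 1 = n" for us vs
    using mu that unfolding multilinear_def by blast
  show "Vector_Spaces.linear scale scale (\<lambda>x. derived_product n mu alpha (xs @ x # ys))"
  proof (cases "length xs < n")
    case True
    define k where "k = n - 1 - length xs"
    have "n - length xs = Suc k"
      using True unfolding k_def by simp
    then have "(\<lambda>x. derived_product n mu alpha (xs @ x # ys))
        = (\<lambda>y. mu ([] @ y # map alpha (drop k ys))) \<circ> (\<lambda>x. mu (xs @ x # take k ys))"
      unfolding derived_product_def using True by (simp add: comp_def)
    then show ?thesis
      by (simp only:) (rule Vector_Spaces.linear_compose; rule lin; use True len in \<open>simp add: k_def\<close>)
  next
    case False
    then have "(\<lambda>x. derived_product n mu alpha (xs @ x # ys))
        = (\<lambda>y. mu ((mu (take n xs) # map alpha (drop n xs)) @ y # map alpha ys)) \<circ> alpha"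
      unfolding derived_product_def by auto
    then show ?thesis
      by (simp only:) (rule Vector_Spaces.linear_compose[OF alpha]; rule lin; use False len in simp)
  qed
qed

lemma derived_product_map:
  assumes mult: "\<And>as. length as = n \<Longrightarrow> f (mu as) = mu (map f as)"
    and len: "length as = 2 * n - 1" "n \<ge> 1"
  shows "f (derived_product n mu f as) = derived_product n mu f (map f as)"
proof -
  have "f (derived_product n mu f as) = mu (f (mu (take n as)) # map f (map f (drop n as)))"
    unfolding derived_product_def by (subst mult) (use len in auto)
  also have "f (mu (take n as)) = mu (map f (take n as))"
    by (rule mult) (use len in simp)
  finally show ?thesis
    unfolding derived_product_def by (simp add: take_map drop_map)
qed

lemma derived_product_multiplicative:
  assumes "\<And>as. length as = n \<Longrightarrow> f (mu as) = mu (map f as)" "n \<ge> 1"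
  shows "multiplicative_with (2 * n - 1) (derived_product n mu f)
           (replicate (2 * n - 2) (f \<circ> f)) (f \<circ> f)"
  unfolding multiplicative_with_def
  using derived_product_map[of n f mu] assms by auto

text \<open>The twisted product of an inner \<open>D\<close> with \<open>n - 1\<close> further letters only
depends on the concatenated word; here it is normalised to the inner \<open>D\<close> in front.\<close>

lemma twisted_derived_product_normal:
  assumes assoc: "totally_hom_associative n mu (replicate (n - 1) f)" and "n \<ge> 1"
    and len: "length P + length Q = n - 1" "length C = 2 * n - 1"
  shows "mu (map (f \<circ> f) P @ [derived_product n mu f C] @ map (f \<circ> f) Q)
       = mu (derived_product n mu f (take (2 * n - 1) (P @ C @ Q))
             # map (f \<circ> f) (drop (2 * n - 1) (P @ C @ Q)))"
proof -
  let ?B = "const_bracket n mu f"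
  define p where "p = length P"
  obtain c11 c12 c21 c22 where C: "C = c11 @ c12 @ c21 @ c22"
    and lc: "length c11 = n - p" "length c12 = p" "length c21 = n - 1 - p" "length c22 = p"
  proof -
    obtain c1 c2 c3 where "C = c1 @ c2 @ c3" "length c1 = n - p" "length c2 = p"
      "length c3 = (n - 1 - p) + p"
      by (rule list_split3[of C]) (use len in \<open>auto simp: p_def\<close>)
    moreover obtain c31 c32 where "c3 = c31 @ c32" "length c31 = n - 1 - p" "length c32 = p"
    proof
      show "c3 = take (n - 1 - p) c3 @ drop (n - 1 - p) c3" by simp
    qed (use \<open>length c3 = _\<close> in auto)
    ultimately show thesis using that by simp
  qed
  have lp: "p \<le> n - 1" "length Q = n - 1 - p"
    using len unfolding p_def by auto
  define xs where "xs = map f P @ (mu (c11 @ c12) # map f c21 @ map f c22) @ map f Q"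
  have "derived_product n mu f C = mu (mu (c11 @ c12) # map f c21 @ map f c22)"
    using lc lp unfolding C by (subst append_assoc[symmetric], subst derived_product_append) auto
  then have "mu (map (f \<circ> f) P @ [derived_product n mu f C] @ map (f \<circ> f) Q) = ?B p xs"
    unfolding xs_def using lc lp assms(2) by (subst const_bracket_append) (auto simp: p_def)
  also have "\<dots> = ?B 0 xs"
    by (rule const_bracket_eq_first[OF assoc]) (use lc lp assms(2) in \<open>auto simp: xs_def p_def\<close>)
  also have "\<dots> = derived_product n mu f
      ((map f P @ [mu (c11 @ c12)] @ map f c21) @ map f c22 @ map f Q)"
    by (simp add: derived_product_eq_const_bracket xs_def)
  also have "\<dots> = mu (mu (map f P @ [mu (c11 @ c12)] @ map f c21) # map f (map f c22 @ map f Q))"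
    using lc lp assms(2) by (subst derived_product_append) (auto simp: p_def)
  also have "mu (map f P @ [mu (c11 @ c12)] @ map f c21) = ?B p (P @ (c11 @ c12) @ c21)"
    by (rule const_bracket_append[symmetric]) (use lc lp in \<open>auto simp: p_def\<close>)
  also have "\<dots> = ?B 0 (P @ (c11 @ c12) @ c21)"
    by (rule const_bracket_eq_first[OF assoc]) (use lc lp assms(2) in \<open>auto simp: p_def\<close>)
  also have "\<dots> = derived_product n mu f (P @ c11 @ c12 @ c21)"
    by (simp add: derived_product_eq_const_bracket)
  finally show ?thesis
    using lc lp by (simp add: C p_def comp_def)
qed

lemma derived_bracket_normal:
  assumes assoc: "totally_hom_associative n mu (replicate (n - 1) f)" and "n \<ge> 1"
    and len: "length A + length R = n - 1" "length P + length Q = n - 1" "length C = 2 * n - 1"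
  shows "const_bracket (2 * n - 1) (derived_product n mu f) (f \<circ> f) (length A + length P)
           (A @ (P @ C @ Q) @ R)
       = mu (map f (map (f \<circ> f) A)
             @ [mu (derived_product n mu f (take (2 * n - 1) (P @ C @ Q))
                    # map (f \<circ> f) (drop (2 * n - 1) (P @ C @ Q)))]
             @ map f (map (f \<circ> f) R))"
proof -
  let ?D = "derived_product n mu f"
  let ?W = "map (f \<circ> f) P @ [?D C] @ map (f \<circ> f) Q"
  have "const_bracket (2 * n - 1) ?D (f \<circ> f) (length A + length P) (A @ (P @ C @ Q) @ R)
      = ?D (map (f \<circ> f) A @ ?W @ map (f \<circ> f) R)"
    using const_bracket_append[of "A @ P" _ C "2 * n - 1" ?D "f \<circ> f" "Q @ R"] len by simp
  also have "\<dots> = const_bracket n mu f (length A) (map (f \<circ> f) A @ ?W @ map (f \<circ> f) R)"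
    unfolding derived_product_eq_const_bracket
    by (rule const_bracket_eq_first[OF assoc, symmetric]) (use len assms(2) in auto)
  also have "\<dots> = mu (map f (map (f \<circ> f) A) @ [mu ?W] @ map f (map (f \<circ> f) R))"
    by (rule const_bracket_append) (use len assms(2) in auto)
  finally show ?thesis
    using twisted_derived_product_normal[OF assoc assms(2) len(2,3)] by simp
qed

lemma derived_bracket_shift:
  assumes assoc: "totally_hom_associative n mu (replicate (n - 1) f)"
    and "n \<ge> 1" "i \<le> n - 1" "p \<le> n - 1" "length as = 4 * n - 3"
  shows "const_bracket (2 * n - 1) (derived_product n mu f) (f \<circ> f) (i + p) as
       = const_bracket (2 * n - 1) (derived_product n mu f) (f \<circ> f) i as"
proof -
  obtain A Y R where as: "as = A @ Y @ R"
    and len: "length A = i" "length Y = 3 * n - 2" "length R = n - 1 - i"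
    by (rule list_split3[of as i "3 * n - 2" "n - 1 - i"]) (use assms in auto)
  obtain P C Q where Y: "Y = P @ C @ Q"
    and lenY: "length P = p" "length C = 2 * n - 1" "length Q = n - 1 - p"
    by (rule list_split3[of Y p "2 * n - 1" "n - 1 - p"]) (use assms len in auto)
  obtain C' Q' where Y': "Y = C' @ Q'" "length C' = 2 * n - 1" "length Q' = n - 1"
  proof
    show "Y = take (2 * n - 1) Y @ drop (2 * n - 1) Y" by simp
  qed (use len in auto)
  let ?N = "mu (map f (map (f \<circ> f) A)
             @ [mu (derived_product n mu f (take (2 * n - 1) Y)
                    # map (f \<circ> f) (drop (2 * n - 1) Y))]
             @ map f (map (f \<circ> f) R))"
  have "length A + length R = n - 1" "length P + length Q = n - 1"
    using len lenY assms(2-4) by auto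
  then have "const_bracket (2 * n - 1) (derived_product n mu f) (f \<circ> f) (i + p) as = ?N"
    and "const_bracket (2 * n - 1) (derived_product n mu f) (f \<circ> f) (i + 0) as = ?N"
    using derived_bracket_normal[OF assoc \<open>n \<ge> 1\<close> _ _ lenY(2), of A R P Q, folded Y as]
      derived_bracket_normal[OF assoc \<open>n \<ge> 1\<close> _ _ Y'(2), of A R "[]" Q']
    unfolding len(1) lenY(1) by (simp_all add: as Y'(1,3))
  then show ?thesis by simp
qed

lemma derived_product_totally_hom_associative:
  fixes f :: "'v \<Rightarrow> 'v"
  assumes assoc: "totally_hom_associative n mu (replicate (n - 1) f)" and "n \<ge> 1"
  shows "totally_hom_associative (2 * n - 1) (derived_product n mu f)
           (replicate (2 * n - 2) (f \<circ> f))"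
  unfolding totally_hom_associative_def
proof (intro allI impI)
  fix j and as :: "'v list"
  assume j: "j + 1 < 2 * n - 1" and len: "length as = 2 * (2 * n - 1) - 1"
  let ?B = "const_bracket (2 * n - 1) (derived_product n mu f) (f \<circ> f)"
  have len': "length as = 4 * n - 3"
    using len by simp
  have "?B j as = ?B (j + 1) as"
  proof (cases "j + 1 \<le> n - 1")
    case True
    have "?B (0 + j) as = ?B 0 as" "?B (0 + (j + 1)) as = ?B 0 as"
      by (rule derived_bracket_shift[OF assoc \<open>n \<ge> 1\<close>]; use True len' in simp)+
    then show ?thesis by simp
  next
    case False
    define p where "p = j - (n - 1)"
    have j_eq: "j = (n - 1) + p" and p: "p + 1 \<le> n - 1"
      using False j unfolding p_def by auto
    have "?B ((n - 1) + p) as = ?B (n - 1) as" "?B ((n - 1) + (p + 1)) as = ?B (n - 1) as"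
      by (rule derived_bracket_shift[OF assoc \<open>n \<ge> 1\<close>]; use p len' in simp)+
    then show ?thesis
      unfolding j_eq by (simp add: add.assoc)
  qed
  moreover have "replicate (2 * n - 2) (f \<circ> f) = replicate (2 * n - 1 - 1) (f \<circ> f)"
    by simp
  ultimately show "hom_bracket (2 * n - 1) (derived_product n mu f)
        (replicate (2 * n - 2) (f \<circ> f)) j as
      = hom_bracket (2 * n - 1) (derived_product n mu f) (replicate (2 * n - 2) (f \<circ> f)) (j + 1) as"
    using hom_bracket_replicate[of _ "2 * n - 1" as] j len by simp
qed

theorem theorem3p1:
  fixes scale :: "'k::field_char_0 \<Rightarrow> 'v::ab_group_add \<Rightarrow> 'v"
    and n :: nat and mu :: "'v list \<Rightarrow> 'v" and alpha :: "'v \<Rightarrow> 'v"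
  assumes "n \<ge> 2"
    and "multiplicative_hom_algebra scale n mu (replicate (n - 1) alpha)"
    and "totally_hom_associative n mu (replicate (n - 1) alpha)"
  shows "multiplicative_hom_algebra scale (2 * n - 1) (derived_product n mu alpha)
           (replicate (2 * n - 2) (alpha \<circ> alpha))
       \<and> totally_hom_associative (2 * n - 1) (derived_product n mu alpha)
           (replicate (2 * n - 2) (alpha \<circ> alpha))"
proof -
  have "n \<ge> 1"
    using assms(1) by simp
  obtain beta where vs: "Vector_Spaces.vector_space scale" and mu: "multilinear scale n mu"
    and lin: "Vector_Spaces.linear scale scale alpha"
    and mult: "multiplicative_with n mu (replicate (n - 1) alpha) beta"
    using assms(1,2) unfolding multiplicative_hom_algebra_def hom_algebra_def by auto
  have "beta = alpha"
    using mult assms(1) unfolding multiplicative_with_def by auto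
  with mult have "\<And>as. length as = n \<Longrightarrow> alpha (mu as) = mu (map alpha as)"
    unfolding multiplicative_with_def by auto
  then have "multiplicative_with (2 * n - 1) (derived_product n mu alpha)
      (replicate (2 * n - 2) (alpha \<circ> alpha)) (alpha \<circ> alpha)"
    using derived_product_multiplicative \<open>n \<ge> 1\<close> by blast
  moreover have "Vector_Spaces.linear scale scale (alpha \<circ> alpha)"
    using Vector_Spaces.linear_compose[OF lin lin] .
  moreover have "totally_hom_associative (2 * n - 1) (derived_product n mu alpha)
      (replicate (2 * n - 2) (alpha \<circ> alpha))"
    using derived_product_totally_hom_associative[OF assms(3) \<open>n \<ge> 1\<close>] .
  ultimately show ?thesis
    unfolding multiplicative_hom_algebra_def hom_algebra_def
    using vs derived_product_multilinear[OF mu lin] by auto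
qed

end
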